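(* Let $\mu$ be a partition of $n+k$ and $(i,j)$ a cell of $\mu$. Define $$I^k_{i,j}=\{P\in\mathbb{Q}[X_n,Y_n]: P(\partial)Q=0\ \text{for all } Q\in M^k_{i,j}\}.$$ Then $$I^k_{i,j}=\bigcap_{(a_1,b_1),\dots,(a_k,b_k)} I_{\partial x_{n+1}^{a_1}\partial y_{n+1}^{b_1}\cdots\partial x_{n+k}^{a_k}\partial y_{n+k}^{b_k}\Delta_\mu}\ \cap\ \mathbb{Q}[X_n,Y_n],$$ where the intersection runs over all $k$-tuples of distinct cells of $S_\mu(i,j)$ listed in increasing order. Here $\Delta_\mu=\Delta_\mu(X_{n+k},Y_{n+k})$, and for a polynomial $R\in\mathbb{Q}[X_{n+k},Y_{n+k}]$, $I_R$ denotes the set of $P\in\mathbb{Q}[X_{n+k},Y_{n+k}]$ such that $P(\partial)$ kills every partial derivative of $R$.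
   Context: Write $X_m=(x_1,\dots,x_m)$ and $Y_m=(y_1,\dots,y_m)$. For a partition $\mu=(\mu_1\ge\dots\ge\mu_h>0)$, its Ferrers diagram is $\{(a,b):0\le a\le h-1,\ 0\le b\le\mu_{a+1}-1\}$. Cells are ordered by $(p,q)<(p',q')$ iff $q<q'$, or $q=q'$ and $p<p'$. For a lattice diagram $L$ (a finite subset of $\mathbb{N}^2$) with cells $(p_1,q_1)<\dots<(p_m,q_m)$, set $\Delta_L=\det(x_r^{p_t}y_r^{q_t})_{1\le r,t\le m}\in\mathbb{Q}[X_m,Y_m]$, and let $M_L$ be the span of all partial derivatives of $\Delta_L$. For a polynomial $P$, $P(\partial)$ substitutes $\partial/\partial x_r$ and $\partial/\partial y_r$ for $x_r$ and $y_r$. The shadow is $S_\mu(i,j)=\{(a,b)\in\mu:a\ge i,\ b\ge j\}$. The space $M^k_{i,j}=\sum M_{\mu\setminus\{c_1,\dots,c_k\}}\subseteq\mathbb{Q}[X_n,Y_n]$, summed over all sets of $k$ distinct cells of $S_\mu(i,j)$. *)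

theory Defs
  imports Complex_Main "HOL-Library.Poly_Mapping" "HOL-Combinatorics.Permutations"
begin

text \<open>Variables: X r stands for the paper's x_(r+1), Y r for y_(r+1) (0-based indices).\<close>
datatype var = X nat | Y nat

fun var_idx :: "var \<Rightarrow> nat" where
  "var_idx (X r) = r" | "var_idx (Y r) = r"

type_synonym mono = "var \<Rightarrow>\<^sub>0 nat"
type_synonym qpoly = "mono \<Rightarrow>\<^sub>0 rat"

text \<open>Q[X_m,Y_m]: polynomials involving only x_1..x_m, y_1..y_m (indices < m here).\<close>
definition polys :: "nat \<Rightarrow> qpoly set" where
  "polys m = {P :: qpoly. \<forall>\<alpha>\<in>Poly_Mapping.keys P. \<forall>v\<in>Poly_Mapping.keys \<alpha>. var_idx v < m}"

definition smul :: "rat \<Rightarrow> qpoly \<Rightarrow> qpoly" where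
  "smul c Q = Poly_Mapping.map (\<lambda>a. c * a) Q"

definition pd :: "var \<Rightarrow> qpoly \<Rightarrow> qpoly" where
  "pd v P = (\<Sum>m\<in>Poly_Mapping.keys P. Poly_Mapping.single (m - Poly_Mapping.single v 1)
                                   (Poly_Mapping.lookup P m * of_nat (Poly_Mapping.lookup m v)))"

text \<open>The differential operator d^alpha (partial derivatives commute, so the order
  in which the variables are processed is irrelevant).\<close>
definition pdiff :: "mono \<Rightarrow> qpoly \<Rightarrow> qpoly" where
  "pdiff \<alpha> Q = foldr (\<lambda>v. pd v ^^ Poly_Mapping.lookup \<alpha> v)
                 (SOME vs. distinct vs \<and> set vs = Poly_Mapping.keys \<alpha>) Q"

text \<open>P(d) Q: substitute d/dx_r, d/dy_r for x_r, y_r in P and apply to Q.\<close>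
definition apply_op :: "qpoly \<Rightarrow> qpoly \<Rightarrow> qpoly" where
  "apply_op P Q = (\<Sum>\<alpha>\<in>Poly_Mapping.keys P. smul (Poly_Mapping.lookup P \<alpha>) (pdiff \<alpha> Q))"

inductive_set derivs :: "qpoly \<Rightarrow> qpoly set" for R where
  self: "R \<in> derivs R"
| step: "Q \<in> derivs R \<Longrightarrow> pd v Q \<in> derivs R"

definition qspan :: "qpoly set \<Rightarrow> qpoly set" where
  "qspan S = {(\<Sum>q\<in>F. smul (c q) q) | F c. finite F \<and> F \<subseteq> S}"

definition cell_less :: "nat \<times> nat \<Rightarrow> nat \<times> nat \<Rightarrow> bool" where
  "cell_less c d \<longleftrightarrow> snd c < snd d \<or> (snd c = snd d \<and> fst c < fst d)"

definition cells_sorted :: "(nat \<times> nat) set \<Rightarrow> (nat \<times> nat) list" where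
  "cells_sorted L = (THE cs. distinct cs \<and> set cs = L \<and> sorted_wrt cell_less cs)"

text \<open>Delta_L = det (x_r^(p_t) y_r^(q_t)), r,t ranging over 0..m-1.\<close>
definition Delta :: "(nat \<times> nat) set \<Rightarrow> qpoly" where
  "Delta L = (let cs = cells_sorted L; m = length cs in
     (\<Sum>\<sigma>\<in>{\<sigma>. \<sigma> permutes {0..<m}}.
        Poly_Mapping.single
          (\<Sum>r<m. Poly_Mapping.single (X r) (fst (cs ! \<sigma> r))
                 + Poly_Mapping.single (Y r) (snd (cs ! \<sigma> r)))
          (of_int (sign \<sigma>))))"

definition M :: "(nat \<times> nat) set \<Rightarrow> qpoly set" where
  "M L = qspan (derivs (Delta L))"

definition I_of :: "nat \<Rightarrow> qpoly \<Rightarrow> qpoly set" where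
  "I_of N R = {P \<in> polys N. \<forall>Q\<in>derivs R. apply_op P Q = 0}"

definition is_partition :: "nat list \<Rightarrow> bool" where
  "is_partition \<mu> \<longleftrightarrow> sorted_wrt (\<ge>) \<mu> \<and> (\<forall>x\<in>set \<mu>. 0 < x)"

definition ferrers :: "nat list \<Rightarrow> (nat \<times> nat) set" where
  "ferrers \<mu> = {(a, b). a < length \<mu> \<and> b < \<mu> ! a}"

definition shadow :: "nat list \<Rightarrow> nat \<Rightarrow> nat \<Rightarrow> (nat \<times> nat) set" where
  "shadow \<mu> i j = {(a, b) \<in> ferrers \<mu>. i \<le> a \<and> j \<le> b}"

text \<open>M^k_{i,j}: sum of the spaces M_{mu minus C} over k-subsets C of the shadow
  (a sum of subspaces is the span of their union).\<close>
definition Mk :: "nat list \<Rightarrow> nat \<Rightarrow> nat \<Rightarrow> nat \<Rightarrow> qpoly set" where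
  "Mk \<mu> k i j = qspan (\<Union> {M (ferrers \<mu> - C) | C. C \<subseteq> shadow \<mu> i j \<and> card C = k})"

definition Ik :: "nat list \<Rightarrow> nat \<Rightarrow> nat \<Rightarrow> nat \<Rightarrow> nat \<Rightarrow> qpoly set" where
  "Ik \<mu> n k i j = {P \<in> polys n. \<forall>Q\<in>Mk \<mu> k i j. apply_op P Q = 0}"

text \<open>The operator dx_{n+1}^{a_1} dy_{n+1}^{b_1} ... dx_{n+k}^{a_k} dy_{n+k}^{b_k}
  for the list of cells cs = [(a_1,b_1),...,(a_k,b_k)] (0-based variable n+t).\<close>
definition shift_mono :: "nat \<Rightarrow> (nat \<times> nat) list \<Rightarrow> mono" where
  "shift_mono n cs = (\<Sum>t<length cs. Poly_Mapping.single (X (n + t)) (fst (cs ! t))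
                                    + Poly_Mapping.single (Y (n + t)) (snd (cs ! t)))"

end

theory Submission
  imports Defs "HOL-Library.Product_Lexorder"
begin

text \<open>Split the variables into the low ones (index below \<open>n\<close>) and the high ones, and expand a
  polynomial \<open>Q\<close> in the high variables, \<open>Q = \<Sum> Q_h h\<close> with coefficients \<open>Q_h\<close> in the low
  variables. For \<open>P\<close> in the low variables, \<open>P(\<partial>)\<close> acts coefficientwise, while a derivative
  \<open>\<partial>^s\<close> in the high variables only shifts coefficients: \<open>(\<partial>^s Q)_h\<close> is a nonzero multiple
  of \<open>Q_(h+s)\<close>. Expanding \<open>\<Delta>_\<mu>\<close> along its last \<open>k\<close> rows, every coefficient \<open>(\<Delta>_\<mu>)_h\<close>
  is either \<open>0\<close> or \<open>\<plusminus>\<Delta>_(\<mu>-F)\<close>, where \<open>F\<close> is the set of the \<open>k\<close> cells whose exponents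
  make up \<open>h\<close>. If \<open>h = h' + s\<close> with \<open>s\<close> read off from cells of the shadow, then \<open>F\<close> lies in
  the shadow as well, since the shadow is closed upwards in \<open>\<mu>\<close>. Hence \<open>P(\<partial>)\<close> kills every
  \<open>\<partial>^s \<Delta>_\<mu>\<close> iff it kills every \<open>\<Delta>_(\<mu>-C)\<close> with \<open>C\<close> a \<open>k\<close>-subset of the shadow, which
  is membership in \<open>I^k_(i,j)\<close>.\<close>

subsection \<open>Linear operators on polynomials\<close>

lemma lookup_smul [simp]: "Poly_Mapping.lookup (smul c Q) m = c * Poly_Mapping.lookup Q m"
  unfolding smul_def by transfer (auto simp: when_def)

lemma smul_smul: "smul c (smul d a) = smul (c * d) a"
  by (intro poly_mapping_eqI) simp

lemma smul_one [simp]: "smul 1 a = a"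
  by (intro poly_mapping_eqI) simp

lemma smul_eq_zero_iff: "smul c a = 0 \<longleftrightarrow> c = 0 \<or> a = 0"
  by (auto simp: poly_mapping_eq_iff fun_eq_iff)

lemma smul_single: "smul c (Poly_Mapping.single m d) = Poly_Mapping.single m (c * d)"
  by (intro poly_mapping_eqI) (simp add: lookup_single when_def)

lemma lookup_pd: "Poly_Mapping.lookup (pd v P) m =
   Poly_Mapping.lookup P (m + Poly_Mapping.single v 1) * of_nat (Poly_Mapping.lookup m v + 1)"
proof -
  let ?d = "Poly_Mapping.single v (1::nat)"
  have shift: "m' - ?d = m \<and> Poly_Mapping.lookup m' v \<noteq> 0 \<longleftrightarrow> m' = m + ?d" for m'
    by (auto simp: poly_mapping_eq_iff fun_eq_iff lookup_add lookup_minus lookup_single when_def)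
  have "Poly_Mapping.lookup (pd v P) m = (\<Sum>m'\<in>Poly_Mapping.keys P.
      if m' = m + ?d then Poly_Mapping.lookup P m' * of_nat (Poly_Mapping.lookup m v + 1) else 0)"
    unfolding pd_def lookup_sum
  proof (intro sum.cong refl)
    fix m'
    show "Poly_Mapping.lookup (Poly_Mapping.single (m' - ?d)
            (Poly_Mapping.lookup P m' * of_nat (Poly_Mapping.lookup m' v))) m =
          (if m' = m + ?d then Poly_Mapping.lookup P m' * of_nat (Poly_Mapping.lookup m v + 1) else 0)"
      using shift[of m'] by (cases "Poly_Mapping.lookup m' v = 0") (auto simp: lookup_single when_def lookup_add)
  qed
  also have "\<dots> = Poly_Mapping.lookup P (m + ?d) * of_nat (Poly_Mapping.lookup m v + 1)"
    by (cases "m + ?d \<in> Poly_Mapping.keys P") (auto simp: in_keys_iff lookup_add)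
  finally show ?thesis .
qed

lemma pd_commute: "pd u (pd v a) = pd v (pd u a)"
  by (intro poly_mapping_eqI) (auto simp: lookup_pd lookup_add lookup_single when_def algebra_simps)

definition qlinear :: "(qpoly \<Rightarrow> qpoly) \<Rightarrow> bool" where
  "qlinear f \<longleftrightarrow> (\<forall>a b. f (a + b) = f a + f b) \<and> (\<forall>c a. f (smul c a) = smul c (f a))"

lemma qlinear_add: "qlinear f \<Longrightarrow> f (a + b) = f a + f b"
  and qlinear_smul: "qlinear f \<Longrightarrow> f (smul c a) = smul c (f a)"
  unfolding qlinear_def by blast+

lemma qlinear_zero: "qlinear f \<Longrightarrow> f 0 = 0"
  by (metis add_cancel_right_right add_0 qlinear_add)

lemma qlinear_sum: "qlinear f \<Longrightarrow> f (sum g A) = (\<Sum>x\<in>A. f (g x))"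
  by (induction A rule: infinite_finite_induct) (auto simp: qlinear_zero qlinear_add)

lemma qlinear_comp: "qlinear f \<Longrightarrow> qlinear g \<Longrightarrow> qlinear (f \<circ> g)"
  unfolding qlinear_def by simp

lemma qlinear_funpow: "qlinear f \<Longrightarrow> qlinear (f ^^ n)"
  by (induction n) (auto simp: qlinear_def intro: qlinear_comp)

lemma qlinear_foldr: "(\<And>v. qlinear (g v)) \<Longrightarrow> qlinear (foldr g vs)"
  by (induction vs) (auto simp: qlinear_def intro: qlinear_comp)

lemma qlinear_pd: "qlinear (pd v)"
  unfolding qlinear_def by (auto intro!: poly_mapping_eqI simp: lookup_pd lookup_add algebra_simps)

lemma qlinear_pdiff: "qlinear (pdiff \<alpha>)"
  unfolding pdiff_def [abs_def] by (intro qlinear_foldr qlinear_funpow qlinear_pd)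

lemma qlinear_scalar: "qlinear (smul c)"
  unfolding qlinear_def by (auto intro!: poly_mapping_eqI simp: lookup_add algebra_simps)

lemma qlinear_apply_op: "qlinear (apply_op P)"
  unfolding qlinear_def apply_op_def
  by (simp add: qlinear_add[OF qlinear_pdiff] qlinear_smul[OF qlinear_pdiff] qlinear_add[OF qlinear_scalar]
      qlinear_sum[OF qlinear_scalar] sum.distrib smul_smul mult.commute)

lemma commute_funpow: "(\<And>x. f (g x) = g (f x)) \<Longrightarrow> f ((g ^^ n) x) = (g ^^ n) (f x)"
  by (induction n) auto

lemma commute_foldr: "(\<And>v x. f (g v x) = g v (f x)) \<Longrightarrow> f (foldr g vs x) = foldr g vs (f x)"
  by (induction vs arbitrary: x) auto

lemma pd_pdiff_commute: "pd v (pdiff \<alpha> Q) = pdiff \<alpha> (pd v Q)"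
  unfolding pdiff_def by (intro commute_foldr commute_funpow pd_commute)

lemma pd_apply_op_commute: "pd v (apply_op P Q) = apply_op P (pd v Q)"
  unfolding apply_op_def qlinear_sum[OF qlinear_pd] by (simp add: qlinear_smul[OF qlinear_pd] pd_pdiff_commute)

lemma apply_op_pdiff_commute: "apply_op P (pdiff \<alpha> Q) = pdiff \<alpha> (apply_op P Q)"
  unfolding pdiff_def by (intro commute_foldr commute_funpow pd_apply_op_commute[symmetric])

lemma kills_derivs_iff: "(\<forall>Q\<in>derivs R. apply_op P Q = 0) \<longleftrightarrow> apply_op P R = 0"
proof -
  have "apply_op P Q = 0" if "Q \<in> derivs R" "apply_op P R = 0" for Q
    using that by (induction rule: derivs.induct) (auto simp flip: pd_apply_op_commute intro: qlinear_zero qlinear_pd)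
  then show ?thesis using derivs.self by blast
qed

lemma in_qspan: "x \<in> S \<Longrightarrow> x \<in> qspan S"
  unfolding qspan_def by (intro CollectI exI[of _ "{x}"] exI[of _ "\<lambda>_. 1"]) simp

lemma kills_qspan: "(\<And>q. q \<in> S \<Longrightarrow> apply_op P q = 0) \<Longrightarrow> Q \<in> qspan S \<Longrightarrow> apply_op P Q = 0"
  unfolding qspan_def
  by (force simp: qlinear_sum[OF qlinear_apply_op] qlinear_smul[OF qlinear_apply_op]
      qlinear_zero[OF qlinear_scalar] intro!: sum.neutral)


subsection \<open>Coefficients with respect to the high variables\<close>

definition low_mono :: "nat \<Rightarrow> mono \<Rightarrow> mono" where
  "low_mono n m = Abs_poly_mapping (\<lambda>v. if var_idx v < n then Poly_Mapping.lookup m v else 0)"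

definition high_mono :: "nat \<Rightarrow> mono \<Rightarrow> mono" where
  "high_mono n m = Abs_poly_mapping (\<lambda>v. if var_idx v < n then 0 else Poly_Mapping.lookup m v)"

lemma lookup_low_mono: "Poly_Mapping.lookup (low_mono n m) v = (if var_idx v < n then Poly_Mapping.lookup m v else 0)"
proof -
  have "finite {v. (if var_idx v < n then Poly_Mapping.lookup m v else 0) \<noteq> 0}"
    by (rule finite_subset[OF _ finite_lookup[of m]]) auto
  then show ?thesis unfolding low_mono_def by simp
qed

lemma lookup_high_mono: "Poly_Mapping.lookup (high_mono n m) v = (if var_idx v < n then 0 else Poly_Mapping.lookup m v)"
proof -
  have "finite {v. (if var_idx v < n then 0 else Poly_Mapping.lookup m v) \<noteq> 0}"
    by (rule finite_subset[OF _ finite_lookup[of m]]) auto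
  then show ?thesis unfolding high_mono_def by simp
qed

lemma low_mono_add_high_mono: "low_mono n m + high_mono n m = m"
  by (intro poly_mapping_eqI) (simp add: lookup_add lookup_low_mono lookup_high_mono)

lemma low_mono_add: "low_mono n (a + b) = low_mono n a + low_mono n b"
  and high_mono_add: "high_mono n (a + b) = high_mono n a + high_mono n b"
  and low_mono_sum: "low_mono n (sum f A) = (\<Sum>x\<in>A. low_mono n (f x))"
  and high_mono_sum: "high_mono n (sum f A) = (\<Sum>x\<in>A. high_mono n (f x))"
  by (auto intro!: poly_mapping_eqI simp: lookup_add lookup_sum lookup_low_mono lookup_high_mono)

lemma low_mono_single: "low_mono n (Poly_Mapping.single v e) = (if var_idx v < n then Poly_Mapping.single v e else 0)"
  and high_mono_single: "high_mono n (Poly_Mapping.single v e) = (if var_idx v < n then 0 else Poly_Mapping.single v e)"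
  by (auto intro!: poly_mapping_eqI simp: lookup_low_mono lookup_high_mono lookup_single when_def)

lemma high_mono_idem: "high_mono n (high_mono n m) = high_mono n m"
  and high_mono_low_mono: "high_mono n (low_mono n m) = 0"
  and low_mono_high_mono: "low_mono n (high_mono n m) = 0"
  by (auto intro!: poly_mapping_eqI simp: lookup_low_mono lookup_high_mono)

text \<open>For a monomial \<open>h\<close> in the high variables (those of index at least \<open>n\<close>), \<open>high_coeff n h Q\<close>
  is the coefficient of \<open>h\<close> when \<open>Q\<close> is expanded as a polynomial in the high variables with
  coefficients in the low ones.\<close>

definition high_coeff :: "nat \<Rightarrow> mono \<Rightarrow> qpoly \<Rightarrow> qpoly" where
  "high_coeff n h Q =
     Abs_poly_mapping (\<lambda>m. if high_mono n m = 0 then Poly_Mapping.lookup Q (m + h) else 0)"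

lemma lookup_high_coeff: "Poly_Mapping.lookup (high_coeff n h Q) m =
    (if high_mono n m = 0 then Poly_Mapping.lookup Q (m + h) else 0)"
proof -
  have "{m. (if high_mono n m = 0 then Poly_Mapping.lookup Q (m + h) else 0) \<noteq> 0}
      \<subseteq> (\<lambda>m. m - h) ` Poly_Mapping.keys Q"
    by (force simp: in_keys_iff split: if_splits)
  then have "finite {m. (if high_mono n m = 0 then Poly_Mapping.lookup Q (m + h) else 0) \<noteq> 0}"
    by (rule finite_subset) auto
  then show ?thesis unfolding high_coeff_def by simp
qed

lemma qlinear_high_coeff: "qlinear (high_coeff n h)"
  unfolding qlinear_def by (auto intro!: poly_mapping_eqI simp: lookup_high_coeff lookup_add)

lemma eq_zero_if_high_coeffs_eq_zero:
  assumes "\<And>h. high_mono n h = h \<Longrightarrow> high_coeff n h Q = 0"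
  shows "Q = 0"
proof (intro poly_mapping_eqI)
  fix m
  have "Poly_Mapping.lookup (high_coeff n (high_mono n m) Q) (low_mono n m) = 0"
    using assms[OF high_mono_idem] by simp
  then show "Poly_Mapping.lookup Q m = Poly_Mapping.lookup 0 m"
    unfolding lookup_high_coeff high_mono_low_mono low_mono_add_high_mono by simp
qed

lemma high_coeff_single:
  assumes "high_mono n h = h"
  shows "high_coeff n h (Poly_Mapping.single m c) =
    (if high_mono n m = h then Poly_Mapping.single (low_mono n m) c else 0)"
proof (intro poly_mapping_eqI)
  fix m'
  have "high_mono n m' = 0 \<and> m' + h = m \<longleftrightarrow> high_mono n m = h \<and> low_mono n m = m'"
    using assms low_mono_add_high_mono[of n m] low_mono_add_high_mono[of n m']
      low_mono_high_mono[of n h] high_mono_low_mono[of n m]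
    by (auto simp: low_mono_add high_mono_add)
  then show "Poly_Mapping.lookup (high_coeff n h (Poly_Mapping.single m c)) m' =
      Poly_Mapping.lookup (if high_mono n m = h then Poly_Mapping.single (low_mono n m) c else 0) m'"
    by (auto simp: lookup_high_coeff lookup_single when_def)
qed

lemma high_coeff_pd_low:
  assumes "var_idx v < n" "high_mono n h = h"
  shows "high_coeff n h (pd v Q) = pd v (high_coeff n h Q)"
proof (intro poly_mapping_eqI)
  fix m
  have "Poly_Mapping.lookup h v = 0" using assms by (metis lookup_high_mono)
  moreover have "high_mono n (m + Poly_Mapping.single v 1) = high_mono n m"
    using assms(1) by (simp add: high_mono_add high_mono_single)
  ultimately show "Poly_Mapping.lookup (high_coeff n h (pd v Q)) m = Poly_Mapping.lookup (pd v (high_coeff n h Q)) m"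
    by (simp add: lookup_high_coeff lookup_pd lookup_add ac_simps)
qed

lemma high_coeff_pd_high:
  assumes "\<not> var_idx v < n"
  shows "high_coeff n h (pd v Q) =
    smul (of_nat (Poly_Mapping.lookup h v + 1)) (high_coeff n (h + Poly_Mapping.single v 1) Q)"
proof (intro poly_mapping_eqI)
  fix m
  have "high_mono n m = 0 \<Longrightarrow> Poly_Mapping.lookup m v = 0"
    using assms by (metis lookup_high_mono lookup_zero)
  then show "Poly_Mapping.lookup (high_coeff n h (pd v Q)) m = Poly_Mapping.lookup
      (smul (of_nat (Poly_Mapping.lookup h v + 1)) (high_coeff n (h + Poly_Mapping.single v 1) Q)) m"
    by (simp add: lookup_high_coeff lookup_pd lookup_add add.assoc)
qed

lemma high_coeff_funpow_pd_high:
  assumes "\<not> var_idx v < n"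
  shows "\<exists>c. c \<noteq> 0 \<and> high_coeff n h ((pd v ^^ e) Q) = smul c (high_coeff n (h + Poly_Mapping.single v e) Q)"
proof (induction e arbitrary: h)
  case 0
  show ?case by (intro exI[of _ 1]) simp
next
  case (Suc e)
  obtain c where "c \<noteq> 0" and c: "high_coeff n (h + Poly_Mapping.single v 1) ((pd v ^^ e) Q) =
      smul c (high_coeff n (h + Poly_Mapping.single v 1 + Poly_Mapping.single v e) Q)"
    using Suc.IH by blast
  moreover have "h + Poly_Mapping.single v 1 + Poly_Mapping.single v e = h + Poly_Mapping.single v (Suc e)"
    by (simp add: add.assoc flip: single_add)
  ultimately show ?case
    using high_coeff_pd_high[OF assms]
    by (intro exI[of _ "of_nat (Poly_Mapping.lookup h v + 1) * c"]) (simp add: smul_smul)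
qed

lemma pdiff_eq_foldr:
  obtains vs where "distinct vs" "set vs = Poly_Mapping.keys \<alpha>"
    "\<And>Q. pdiff \<alpha> Q = foldr (\<lambda>v. pd v ^^ Poly_Mapping.lookup \<alpha> v) vs Q"
proof -
  have "\<exists>vs. distinct vs \<and> set vs = Poly_Mapping.keys \<alpha>"
    using finite_distinct_list[of "Poly_Mapping.keys \<alpha>"] by auto
  from someI_ex[OF this] show thesis
    by (intro that[of "SOME vs. distinct vs \<and> set vs = Poly_Mapping.keys \<alpha>"]) (auto simp: pdiff_def)
qed

lemma sum_list_single_lookup:
  fixes \<alpha> :: "'a \<Rightarrow>\<^sub>0 'b::comm_monoid_add"
  assumes "distinct vs" "set vs = Poly_Mapping.keys \<alpha>"
  shows "(\<Sum>v\<leftarrow>vs. Poly_Mapping.single v (Poly_Mapping.lookup \<alpha> v)) = \<alpha>"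
proof -
  have "(\<Sum>v\<leftarrow>vs. Poly_Mapping.single v (Poly_Mapping.lookup \<alpha> v)) =
      (\<Sum>v\<in>Poly_Mapping.keys \<alpha>. Poly_Mapping.single v (Poly_Mapping.lookup \<alpha> v))"
    using assms by (simp add: sum_list_distinct_conv_sum_set)
  also have "\<dots> = \<alpha>"
  proof (intro poly_mapping_eqI)
    fix w
    show "Poly_Mapping.lookup (\<Sum>v\<in>Poly_Mapping.keys \<alpha>. Poly_Mapping.single v (Poly_Mapping.lookup \<alpha> v)) w =
        Poly_Mapping.lookup \<alpha> w"
      by (cases "w \<in> Poly_Mapping.keys \<alpha>") (auto simp: lookup_sum lookup_single when_def in_keys_iff)
  qed
  finally show ?thesis .
qed

lemma high_coeff_pdiff_high:
  assumes "\<forall>v\<in>Poly_Mapping.keys \<alpha>. \<not> var_idx v < n"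
  shows "\<exists>c. c \<noteq> 0 \<and> high_coeff n h (pdiff \<alpha> Q) = smul c (high_coeff n (h + \<alpha>) Q)"
proof -
  obtain vs where vs: "distinct vs" "set vs = Poly_Mapping.keys \<alpha>"
    "\<And>Q. pdiff \<alpha> Q = foldr (\<lambda>v. pd v ^^ Poly_Mapping.lookup \<alpha> v) vs Q"
    using pdiff_eq_foldr[of \<alpha>] by blast
  have "\<exists>c. c \<noteq> 0 \<and> high_coeff n h (foldr (\<lambda>v. pd v ^^ Poly_Mapping.lookup \<alpha> v) vs Q) =
      smul c (high_coeff n (h + (\<Sum>v\<leftarrow>vs. Poly_Mapping.single v (Poly_Mapping.lookup \<alpha> v))) Q)"
    if "\<forall>v\<in>set vs. \<not> var_idx v < n" for vs
    using that
  proof (induction vs arbitrary: h)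
    case Nil
    show ?case by (intro exI[of _ 1]) simp
  next
    case (Cons v vs)
    let ?e = "Poly_Mapping.lookup \<alpha>" and ?R = "foldr (\<lambda>v. pd v ^^ Poly_Mapping.lookup \<alpha> v) vs Q"
    obtain c1 where "c1 \<noteq> 0" and c1: "high_coeff n h ((pd v ^^ ?e v) ?R) =
        smul c1 (high_coeff n (h + Poly_Mapping.single v (?e v)) ?R)"
      using high_coeff_funpow_pd_high[of v n h "?e v" ?R] Cons.prems by auto
    obtain c2 where "c2 \<noteq> 0" and c2: "high_coeff n (h + Poly_Mapping.single v (?e v)) ?R =
        smul c2 (high_coeff n (h + Poly_Mapping.single v (?e v) + (\<Sum>v\<leftarrow>vs. Poly_Mapping.single v (?e v))) Q)"
      using Cons by auto
    show ?case
      using \<open>c1 \<noteq> 0\<close> \<open>c2 \<noteq> 0\<close> c1 c2 by (intro exI[of _ "c1 * c2"]) (simp add: smul_smul add.assoc)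
  qed
  from this[of vs] show ?thesis
    using assms vs by (simp add: sum_list_single_lookup)
qed

lemma high_coeff_pdiff_low:
  assumes "\<forall>v\<in>Poly_Mapping.keys \<alpha>. var_idx v < n" "high_mono n h = h"
  shows "high_coeff n h (pdiff \<alpha> Q) = pdiff \<alpha> (high_coeff n h Q)"
proof -
  obtain vs where vs: "distinct vs" "set vs = Poly_Mapping.keys \<alpha>"
    "\<And>Q. pdiff \<alpha> Q = foldr (\<lambda>v. pd v ^^ Poly_Mapping.lookup \<alpha> v) vs Q"
    using pdiff_eq_foldr[of \<alpha>] by blast
  have "high_coeff n h (foldr (\<lambda>v. pd v ^^ Poly_Mapping.lookup \<alpha> v) vs Q) =
      foldr (\<lambda>v. pd v ^^ Poly_Mapping.lookup \<alpha> v) vs (high_coeff n h Q)"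
    if "\<forall>v\<in>set vs. var_idx v < n" for vs Q
    using that
  proof (induction vs arbitrary: Q)
    case (Cons v vs)
    then show ?case
      using commute_funpow[of "high_coeff n h" "pd v", OF high_coeff_pd_low[OF _ assms(2)]] by simp
  qed simp
  from this[of vs] assms(1) vs(2,3) show ?thesis by simp
qed

lemma high_coeff_apply_op:
  assumes "P \<in> polys n" "high_mono n h = h"
  shows "high_coeff n h (apply_op P Q) = apply_op P (high_coeff n h Q)"
  using assms unfolding apply_op_def polys_def
  by (auto simp: qlinear_sum[OF qlinear_high_coeff] qlinear_smul[OF qlinear_high_coeff]
      high_coeff_pdiff_low intro!: sum.cong)

subsection \<open>Cells and the determinant\<close>

lemma cell_less_iff_swap: "cell_less c d \<longleftrightarrow> prod.swap c < prod.swap d"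
  by (cases c; cases d) (auto simp: cell_less_def)

lemma sorted_cell_less_iff: "sorted_wrt cell_less xs \<longleftrightarrow> sorted_wrt (<) (map prod.swap xs)"
proof -
  have "cell_less = (\<lambda>x y. prod.swap x < prod.swap y)"
    by (auto simp: fun_eq_iff cell_less_iff_swap)
  then show ?thesis by (simp add: sorted_wrt_map)
qed

lemma sorted_cell_less_distinct: "sorted_wrt cell_less xs \<Longrightarrow> distinct xs"
  unfolding sorted_cell_less_iff using strict_sorted_iff distinct_map by blast

lemma cells_sorted_eq: "sorted_wrt cell_less xs \<Longrightarrow> cells_sorted (set xs) = xs"
proof -
  assume xs: "sorted_wrt cell_less xs"
  have "ys = xs" if "sorted_wrt cell_less ys" "set ys = set xs" for ys
  proof -
    have "map prod.swap ys = map prod.swap xs"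
      using that xs unfolding sorted_cell_less_iff by (intro strict_sorted_equal) auto
    then show ?thesis by (simp add: inj_map_eq_map)
  qed
  then show ?thesis
    unfolding cells_sorted_def using xs by (intro the_equality) (auto intro: sorted_cell_less_distinct)
qed

lemma cells_sorted:
  assumes "finite L"
  shows "sorted_wrt cell_less (cells_sorted L)" "set (cells_sorted L) = L"
proof -
  define xs where "xs = map prod.swap (sorted_list_of_set (prod.swap ` L))"
  have "sorted_wrt cell_less xs" "set xs = L"
    using assms unfolding xs_def sorted_cell_less_iff by (auto simp: comp_def image_image)
  then show "sorted_wrt cell_less (cells_sorted L)" "set (cells_sorted L) = L"
    using cells_sorted_eq by metis+
qed

definition row_mono :: "(nat \<times> nat) list \<Rightarrow> (nat \<Rightarrow> nat) \<Rightarrow> nat \<Rightarrow> mono" where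
  "row_mono ws \<sigma> r = Poly_Mapping.single (X r) (fst (ws ! \<sigma> r)) + Poly_Mapping.single (Y r) (snd (ws ! \<sigma> r))"

lemma Delta_sorted:
  "sorted_wrt cell_less ws \<Longrightarrow> Delta (set ws) = (\<Sum>\<sigma> | \<sigma> permutes {0..<length ws}.
     Poly_Mapping.single (\<Sum>r<length ws. row_mono ws \<sigma> r) (of_int (sign \<sigma>)))"
  unfolding Delta_def cells_sorted_eq Let_def row_mono_def by simp

lemma permutes_nth_append:
  assumes "distinct ws" "distinct ds" "set ds \<subseteq> set ws"
  obtains \<rho> where "\<rho> permutes {0..<length ws}"
    "length (filter (\<lambda>c. c \<notin> set ds) ws) + length ds = length ws"
    "\<And>r. r < length ws \<Longrightarrow> ws ! \<rho> r = (filter (\<lambda>c. c \<notin> set ds) ws @ ds) ! r"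
proof -
  let ?rs = "filter (\<lambda>c. c \<notin> set ds) ws"
  have "mset (?rs @ ds) = mset ws"
    using assms by (subst set_eq_iff_mset_eq_distinct[symmetric]) auto
  moreover from this obtain \<rho> where "\<rho> permutes {..<length ws}" "permute_list \<rho> ws = ?rs @ ds"
    by (rule mset_eq_permutation)
  moreover note permute_list_nth[of \<rho> ws]
  ultimately show thesis
    by (intro that[of \<rho>]) (auto simp: atLeast0LessThan dest: arg_cong[of _ _ size])
qed

lemma perms_with_tail_eq_image:
  assumes \<rho>: "\<rho> permutes {0..<n + k}" "\<And>t. t < k \<Longrightarrow> ws ! \<rho> (n + t) = ds ! t"
    and ws: "distinct ws" "length ws = n + k"
  shows "{\<sigma>. \<sigma> permutes {0..<n + k} \<and> (\<forall>t<k. ws ! \<sigma> (n + t) = ds ! t)} =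
    (\<lambda>\<tau>. \<rho> \<circ> \<tau>) ` {\<tau>. \<tau> permutes {0..<n}}"
proof (intro set_eqI iffI)
  fix \<sigma> assume "\<sigma> \<in> {\<sigma>. \<sigma> permutes {0..<n + k} \<and> (\<forall>t<k. ws ! \<sigma> (n + t) = ds ! t)}"
  then have \<sigma>: "\<sigma> permutes {0..<n + k}" "\<And>t. t < k \<Longrightarrow> ws ! \<sigma> (n + t) = ds ! t" by auto
  have tail: "\<sigma> (n + t) = \<rho> (n + t)" if "t < k" for t
  proof -
    have "\<sigma> (n + t) < n + k" "\<rho> (n + t) < n + k"
      using permutes_in_image[OF \<sigma>(1)] permutes_in_image[OF \<rho>(1)] that by auto
    moreover have "ws ! \<sigma> (n + t) = ws ! \<rho> (n + t)" using \<sigma>(2) \<rho>(2) that by simp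
    ultimately show ?thesis using ws by (simp add: nth_eq_iff_index_eq)
  qed
  have "inv \<rho> \<circ> \<sigma> permutes {0..<n}"
  proof (rule permutes_superset[OF permutes_compose[OF \<sigma>(1) permutes_inv[OF \<rho>(1)]]])
    fix x assume "x \<in> {0..<n + k} - {0..<n}"
    then have "x = n + (x - n)" "x - n < k" by auto
    then show "(inv \<rho> \<circ> \<sigma>) x = x"
      using tail permutes_inverses(2)[OF \<rho>(1)] by (metis comp_apply)
  qed
  moreover have "\<sigma> = \<rho> \<circ> (inv \<rho> \<circ> \<sigma>)" using permutes_inverses(1)[OF \<rho>(1)] by (simp add: fun_eq_iff)
  ultimately show "\<sigma> \<in> (\<lambda>\<tau>. \<rho> \<circ> \<tau>) ` {\<tau>. \<tau> permutes {0..<n}}" by blast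
next
  fix \<sigma> assume "\<sigma> \<in> (\<lambda>\<tau>. \<rho> \<circ> \<tau>) ` {\<tau>. \<tau> permutes {0..<n}}"
  then obtain \<tau> where \<tau>: "\<tau> permutes {0..<n}" and "\<sigma> = \<rho> \<circ> \<tau>" by blast
  moreover have "\<tau> permutes {0..<n + k}" using \<tau> by (rule permutes_subset) auto
  moreover have "\<tau> (n + t) = n + t" for t using \<tau> by (intro permutes_not_in) auto
  ultimately show "\<sigma> \<in> {\<sigma>. \<sigma> permutes {0..<n + k} \<and> (\<forall>t<k. ws ! \<sigma> (n + t) = ds ! t)}"
    using permutes_compose \<rho> by auto
qed

text \<open>Expansion of the determinant along its last \<open>k\<close> rows: fixing which cells the rows
  \<open>n, \<dots>, n + k - 1\<close> take leaves the determinant of the remaining cells.\<close>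

lemma sum_perms_with_tail:
  assumes ws: "sorted_wrt cell_less ws" "length ws = n + k"
    and ds: "length ds = k" "distinct ds" "set ds \<subseteq> set ws"
  shows "\<exists>\<epsilon>. (\<epsilon> = 1 \<or> \<epsilon> = -1) \<and>
    (\<Sum>\<sigma> | \<sigma> permutes {0..<n + k} \<and> (\<forall>t<k. ws ! \<sigma> (n + t) = ds ! t).
        Poly_Mapping.single (\<Sum>r<n. row_mono ws \<sigma> r) (of_int (sign \<sigma>)))
    = smul \<epsilon> (Delta (set ws - set ds))"
proof -
  define rs where "rs = filter (\<lambda>c. c \<notin> set ds) ws"
  have "distinct ws" using ws(1) by (rule sorted_cell_less_distinct)
  then obtain \<rho> where \<rho>: "\<rho> permutes {0..<n + k}" and "length rs = n"
    and ws_\<rho>: "\<And>r. r < n + k \<Longrightarrow> ws ! \<rho> r = (rs @ ds) ! r"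
    using permutes_nth_append[OF _ ds(2,3)] ws(2) ds(1) unfolding rs_def by (metis add_right_cancel)
  have rs: "sorted_wrt cell_less rs" "set rs = set ws - set ds"
    unfolding rs_def using ws(1) by (auto simp: sorted_wrt_filter)
  have B: "{\<sigma>. \<sigma> permutes {0..<n + k} \<and> (\<forall>t<k. ws ! \<sigma> (n + t) = ds ! t)} =
      (\<lambda>\<tau>. \<rho> \<circ> \<tau>) ` {\<tau>. \<tau> permutes {0..<n}}"
    using ws_\<rho> \<open>length rs = n\<close>
    by (intro perms_with_tail_eq_image[OF \<rho> _ \<open>distinct ws\<close> ws(2)]) (simp add: nth_append)
  have "inj_on (\<lambda>\<tau>. \<rho> \<circ> \<tau>) {\<tau>. \<tau> permutes {0..<n}}"
    using permutes_inj[OF \<rho>] by (auto intro!: inj_onI simp: fun_eq_iff inj_eq)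
  moreover have "Poly_Mapping.single (\<Sum>r<n. row_mono ws (\<rho> \<circ> \<tau>) r) (of_int (sign (\<rho> \<circ> \<tau>)) :: rat) =
      smul (of_int (sign \<rho>)) (Poly_Mapping.single (\<Sum>r<n. row_mono rs \<tau> r) (of_int (sign \<tau>)))"
    if \<tau>: "\<tau> permutes {0..<n}" for \<tau>
  proof -
    have "ws ! (\<rho> \<circ> \<tau>) r = rs ! \<tau> r" if "r < n" for r
      using permutes_in_image[OF \<tau>, of r] ws_\<rho>[of "\<tau> r"] \<open>length rs = n\<close> that by (simp add: nth_append)
    then have "(\<Sum>r<n. row_mono ws (\<rho> \<circ> \<tau>) r) = (\<Sum>r<n. row_mono rs \<tau> r)"
      by (intro sum.cong) (simp_all add: row_mono_def)
    moreover have "sign (\<rho> \<circ> \<tau>) = sign \<rho> * sign \<tau>"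
      using \<rho> \<tau> by (intro sign_compose) (auto simp: permutation_permutes)
    ultimately show ?thesis by (simp add: smul_single)
  qed
  ultimately have "(\<Sum>\<sigma> | \<sigma> permutes {0..<n + k} \<and> (\<forall>t<k. ws ! \<sigma> (n + t) = ds ! t).
        Poly_Mapping.single (\<Sum>r<n. row_mono ws \<sigma> r) (of_int (sign \<sigma>))) =
      smul (of_int (sign \<rho>)) (Delta (set ws - set ds))"
    unfolding B Delta_sorted[OF rs(1), unfolded rs(2) \<open>length rs = n\<close>]
    by (simp add: sum.reindex qlinear_sum[OF qlinear_scalar])
  then show ?thesis by (intro exI[of _ "of_int (sign \<rho>)"]) (simp add: sign_def)
qed

lemma lookup_shift_mono_X: "Poly_Mapping.lookup (shift_mono n cs) (X (n + t)) = (if t < length cs then fst (cs ! t) else 0)"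
  and lookup_shift_mono_Y: "Poly_Mapping.lookup (shift_mono n cs) (Y (n + t)) = (if t < length cs then snd (cs ! t) else 0)"
  by (simp_all add: shift_mono_def lookup_sum lookup_add lookup_single when_def)

lemma high_mono_shift_mono: "high_mono n (shift_mono n cs) = shift_mono n cs"
  by (simp add: shift_mono_def high_mono_sum high_mono_add high_mono_single)

lemma shift_mono_inject:
  assumes "length cs = length ds"
  shows "shift_mono n cs = shift_mono n ds \<longleftrightarrow> cs = ds"
proof
  assume eq: "shift_mono n cs = shift_mono n ds"
  show "cs = ds"
  proof (rule nth_equalityI)
    fix t assume "t < length cs"
    then show "cs ! t = ds ! t"
      using assms arg_cong[OF eq, of "\<lambda>m. Poly_Mapping.lookup m (X (n + t))"]
        arg_cong[OF eq, of "\<lambda>m. Poly_Mapping.lookup m (Y (n + t))"]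
      by (simp add: lookup_shift_mono_X lookup_shift_mono_Y prod_eq_iff)
  qed (rule assms)
qed simp

lemma sum_lessThan_add: "(\<Sum>r<n + (k::nat). f r) = (\<Sum>r<n. f r) + (\<Sum>t<k. f (n + t))"
  by (induction k) (simp_all add: add.assoc)

lemma high_mono_row_monos:
  "high_mono n (\<Sum>r<n + k. row_mono ws \<sigma> r) = shift_mono n (map (\<lambda>t. ws ! \<sigma> (n + t)) [0..<k])"
  by (simp add: sum_lessThan_add high_mono_add high_mono_sum high_mono_single row_mono_def shift_mono_def)

lemma low_mono_row_monos: "low_mono n (\<Sum>r<n + k. row_mono ws \<sigma> r) = (\<Sum>r<n. row_mono ws \<sigma> r)"
  by (simp add: sum_lessThan_add low_mono_add low_mono_sum low_mono_single row_mono_def)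

lemma high_coeff_Delta:
  assumes "sorted_wrt cell_less ws" "length ws = n + k" "high_mono n h = h"
  shows "high_coeff n h (Delta (set ws)) =
    (\<Sum>\<sigma> | \<sigma> permutes {0..<n + k} \<and> high_mono n (\<Sum>r<n + k. row_mono ws \<sigma> r) = h.
      Poly_Mapping.single (\<Sum>r<n. row_mono ws \<sigma> r) (of_int (sign \<sigma>)))"
proof -
  have "finite {\<sigma>. \<sigma> permutes {0..<n + k}}" by (rule finite_permutations) simp
  then show ?thesis
    unfolding Delta_sorted[OF assms(1)] assms(2) qlinear_sum[OF qlinear_high_coeff]
    by (simp add: high_coeff_single[OF assms(3)] low_mono_row_monos sum.inter_filter[symmetric] conj_commute)
qed

lemma high_coeff_Delta_shift_mono:
  assumes ws: "sorted_wrt cell_less ws" "length ws = n + k"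
    and ds: "length ds = k" "distinct ds" "set ds \<subseteq> set ws"
  shows "\<exists>\<epsilon>. (\<epsilon> = 1 \<or> \<epsilon> = -1) \<and>
    high_coeff n (shift_mono n ds) (Delta (set ws)) = smul \<epsilon> (Delta (set ws - set ds))"
proof -
  have "high_mono n (\<Sum>r<n + k. row_mono ws \<sigma> r) = shift_mono n ds \<longleftrightarrow> (\<forall>t<k. ws ! \<sigma> (n + t) = ds ! t)" for \<sigma>
    unfolding high_mono_row_monos using ds(1) by (simp add: shift_mono_inject list_eq_iff_nth_eq)
  then show ?thesis
    using sum_perms_with_tail[OF ws ds] by (simp add: high_coeff_Delta[OF ws high_mono_shift_mono])
qed

lemma high_coeff_Delta_nonzero:
  assumes ws: "sorted_wrt cell_less ws" "length ws = n + k"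
    and h: "high_mono n h = h" "high_coeff n h (Delta (set ws)) \<noteq> 0"
  obtains ds where "length ds = k" "distinct ds" "set ds \<subseteq> set ws" "h = shift_mono n ds"
proof -
  have "{\<sigma>. \<sigma> permutes {0..<n + k} \<and> high_mono n (\<Sum>r<n + k. row_mono ws \<sigma> r) = h} \<noteq> {}"
    using h(2) unfolding high_coeff_Delta[OF ws h(1)] by (metis sum.empty)
  then obtain \<sigma> where \<sigma>: "\<sigma> permutes {0..<n + k}" "high_mono n (\<Sum>r<n + k. row_mono ws \<sigma> r) = h"
    by blast
  define ds where "ds = map (\<lambda>t. ws ! \<sigma> (n + t)) [0..<k]"
  have bound: "\<sigma> (n + t) < length ws" if "t < k" for t using permutes_in_image[OF \<sigma>(1)] that ws(2) by simp
  have "inj_on (\<lambda>t. ws ! \<sigma> (n + t)) {0..<k}"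
  proof (rule inj_onI)
    fix x y assume "x \<in> {0..<k}" "y \<in> {0..<k}" "ws ! \<sigma> (n + x) = ws ! \<sigma> (n + y)"
    then have "\<sigma> (n + x) = \<sigma> (n + y)"
      using bound sorted_cell_less_distinct[OF ws(1)] by (simp add: nth_eq_iff_index_eq)
    then show "x = y" using permutes_inj[OF \<sigma>(1)] by (simp add: inj_eq)
  qed
  then have "distinct ds" by (simp add: ds_def distinct_map)
  moreover have "set ds \<subseteq> set ws" using bound by (auto simp: ds_def)
  moreover have "h = shift_mono n ds" using \<sigma>(2) by (simp add: ds_def high_mono_row_monos)
  ultimately show thesis by (intro that[of ds]) (simp_all add: ds_def)
qed


lemma keys_shift_mono: "v \<in> Poly_Mapping.keys (shift_mono n cs) \<Longrightarrow> \<not> var_idx v < n"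
  by (metis high_mono_shift_mono in_keys_iff lookup_high_mono)

subsection \<open>Killing the determinant and its high derivatives\<close>

lemma kills_Delta_diff_if_kills_pdiff_shift_mono:
  assumes ws: "sorted_wrt cell_less ws" "length ws = n + k" and P: "P \<in> polys n"
    and cs: "length cs = k" "distinct cs" "set cs \<subseteq> set ws"
    and kill: "apply_op P (pdiff (shift_mono n cs) (Delta (set ws))) = 0"
  shows "apply_op P (Delta (set ws - set cs)) = 0"
proof -
  let ?s = "shift_mono n cs" and ?Q = "apply_op P (Delta (set ws))"
  obtain c where "c \<noteq> 0" and c: "high_coeff n 0 (pdiff ?s ?Q) = smul c (high_coeff n ?s ?Q)"
    using high_coeff_pdiff_high[of ?s n 0 ?Q] keys_shift_mono by auto
  obtain \<epsilon> where "\<epsilon> = 1 \<or> \<epsilon> = -1" and \<epsilon>: "high_coeff n ?s (Delta (set ws)) = smul \<epsilon> (Delta (set ws - set cs))"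
    using high_coeff_Delta_shift_mono[OF ws cs] by blast
  have "smul c (smul \<epsilon> (apply_op P (Delta (set ws - set cs)))) = 0"
    using c kill
    by (simp add: apply_op_pdiff_commute high_coeff_apply_op[OF P high_mono_shift_mono] \<epsilon>
        qlinear_smul[OF qlinear_apply_op] qlinear_zero[OF qlinear_high_coeff])
  with \<open>c \<noteq> 0\<close> \<open>\<epsilon> = 1 \<or> \<epsilon> = -1\<close> show ?thesis by (auto simp: smul_eq_zero_iff)
qed

lemma shift_mono_nth_le:
  assumes "h + shift_mono n cs = shift_mono n ds" "length cs = length ds" "t < length ds"
  shows "fst (cs ! t) \<le> fst (ds ! t)" "snd (cs ! t) \<le> snd (ds ! t)"
  using arg_cong[OF assms(1), of "\<lambda>m. Poly_Mapping.lookup m (X (n + t))"]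
    arg_cong[OF assms(1), of "\<lambda>m. Poly_Mapping.lookup m (Y (n + t))"] assms(2,3)
  by (simp_all add: lookup_add lookup_shift_mono_X lookup_shift_mono_Y)

lemma kills_high_coeff_Delta:
  assumes ws: "sorted_wrt cell_less ws" "length ws = n + k" and P: "P \<in> polys n"
    and cs: "length cs = k" "set cs \<subseteq> S"
    and S_up: "\<And>c d. c \<in> S \<Longrightarrow> d \<in> set ws \<Longrightarrow> fst c \<le> fst d \<Longrightarrow> snd c \<le> snd d \<Longrightarrow> d \<in> S"
    and kill: "\<And>C. C \<subseteq> S \<Longrightarrow> card C = k \<Longrightarrow> apply_op P (Delta (set ws - C)) = 0"
    and h: "high_mono n h = h"
  shows "apply_op P (high_coeff n (h + shift_mono n cs) (Delta (set ws))) = 0"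
proof (cases "high_coeff n (h + shift_mono n cs) (Delta (set ws)) = 0")
  case True
  then show ?thesis by (simp add: qlinear_zero[OF qlinear_apply_op])
next
  case False
  have "high_mono n (h + shift_mono n cs) = h + shift_mono n cs"
    using h by (simp add: high_mono_add high_mono_shift_mono)
  with False obtain ds where ds: "length ds = k" "distinct ds" "set ds \<subseteq> set ws"
    and h_ds: "h + shift_mono n cs = shift_mono n ds"
    using high_coeff_Delta_nonzero[OF ws] by metis
  have "set ds \<subseteq> S"
  proof
    fix d assume "d \<in> set ds"
    then obtain t where t: "t < k" "d = ds ! t" using ds(1) by (auto simp: in_set_conv_nth)
    have "cs ! t \<in> S" using cs t by auto
    moreover have "fst (cs ! t) \<le> fst d" "snd (cs ! t) \<le> snd d"
      using shift_mono_nth_le[OF h_ds] cs(1) ds(1) t by auto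
    ultimately show "d \<in> S" using S_up \<open>d \<in> set ds\<close> ds(3) by blast
  qed
  moreover obtain \<epsilon> where "high_coeff n (h + shift_mono n cs) (Delta (set ws)) = smul \<epsilon> (Delta (set ws - set ds))"
    using high_coeff_Delta_shift_mono[OF ws ds] h_ds by auto
  ultimately show ?thesis
    using kill[of "set ds"] distinct_card[OF ds(2)] ds(1)
    by (simp add: qlinear_smul[OF qlinear_apply_op] qlinear_zero[OF qlinear_scalar])
qed

lemma kills_pdiff_shift_mono_if_kills_Delta_diff:
  assumes ws: "sorted_wrt cell_less ws" "length ws = n + k" and P: "P \<in> polys n"
    and cs: "length cs = k" "set cs \<subseteq> S"
    and S_up: "\<And>c d. c \<in> S \<Longrightarrow> d \<in> set ws \<Longrightarrow> fst c \<le> fst d \<Longrightarrow> snd c \<le> snd d \<Longrightarrow> d \<in> S"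
    and kill: "\<And>C. C \<subseteq> S \<Longrightarrow> card C = k \<Longrightarrow> apply_op P (Delta (set ws - C)) = 0"
  shows "apply_op P (pdiff (shift_mono n cs) (Delta (set ws))) = 0"
proof -
  let ?s = "shift_mono n cs" and ?Q = "apply_op P (Delta (set ws))"
  have "pdiff ?s ?Q = 0"
  proof (rule eq_zero_if_high_coeffs_eq_zero)
    fix h assume h: "high_mono n h = h"
    obtain c where "high_coeff n h (pdiff ?s ?Q) = smul c (high_coeff n (h + ?s) ?Q)"
      using high_coeff_pdiff_high[of ?s n h ?Q] keys_shift_mono by auto
    also have "high_coeff n (h + ?s) ?Q = apply_op P (high_coeff n (h + ?s) (Delta (set ws)))"
      using h by (intro high_coeff_apply_op[OF P]) (simp add: high_mono_add high_mono_shift_mono)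
    also have "\<dots> = 0" by (rule kills_high_coeff_Delta[OF ws P cs S_up kill h])
    finally show "high_coeff n h (pdiff ?s ?Q) = 0" by (simp add: qlinear_zero[OF qlinear_scalar])
  qed
  then show ?thesis by (simp add: apply_op_pdiff_commute)
qed

lemma kills_pdiff_shift_mono_iff_kills_Delta_diff:
  assumes ws: "sorted_wrt cell_less ws" "length ws = n + k" and P: "P \<in> polys n"
    and S: "S \<subseteq> set ws"
    and S_up: "\<And>c d. c \<in> S \<Longrightarrow> d \<in> set ws \<Longrightarrow> fst c \<le> fst d \<Longrightarrow> snd c \<le> snd d \<Longrightarrow> d \<in> S"
  shows "(\<forall>cs. length cs = k \<and> distinct cs \<and> set cs \<subseteq> S \<and> sorted_wrt cell_less cs \<longrightarrow>
        apply_op P (pdiff (shift_mono n cs) (Delta (set ws))) = 0) \<longleftrightarrow>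
    (\<forall>C. C \<subseteq> S \<and> card C = k \<longrightarrow> apply_op P (Delta (set ws - C)) = 0)"
proof (intro iffI allI impI)
  fix C assume C: "C \<subseteq> S \<and> card C = k" and kill: "\<forall>cs. length cs = k \<and> distinct cs \<and> set cs \<subseteq> S \<and>
      sorted_wrt cell_less cs \<longrightarrow> apply_op P (pdiff (shift_mono n cs) (Delta (set ws))) = 0"
  define cs where "cs = cells_sorted C"
  have "C \<subseteq> set ws" using C S by blast
  then have cs: "sorted_wrt cell_less cs" "set cs = C"
    using cells_sorted finite_subset unfolding cs_def by blast+
  then have "distinct cs" by (simp add: sorted_cell_less_distinct)
  then have "length cs = k" using distinct_card[of cs] cs(2) C by simp
  then have "apply_op P (pdiff (shift_mono n cs) (Delta (set ws))) = 0"
    using kill[rule_format, of cs] cs C \<open>distinct cs\<close> by simp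
  from kills_Delta_diff_if_kills_pdiff_shift_mono[OF ws P \<open>length cs = k\<close> \<open>distinct cs\<close> _ this]
  show "apply_op P (Delta (set ws - C)) = 0" using cs(2) \<open>C \<subseteq> set ws\<close> by simp
next
  fix cs assume "\<forall>C. C \<subseteq> S \<and> card C = k \<longrightarrow> apply_op P (Delta (set ws - C)) = 0"
    and "length cs = k \<and> distinct cs \<and> set cs \<subseteq> S \<and> sorted_wrt cell_less cs"
  then show "apply_op P (pdiff (shift_mono n cs) (Delta (set ws))) = 0"
    by (intro kills_pdiff_shift_mono_if_kills_Delta_diff[OF ws P _ _ S_up]) auto
qed

subsection \<open>Membership in the ideals\<close>

lemma mem_I_of_iff: "P \<in> I_of N R \<longleftrightarrow> P \<in> polys N \<and> apply_op P R = 0"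
  unfolding I_of_def kills_derivs_iff by simp

lemma mem_Ik_iff: "P \<in> Ik \<mu> n k i j \<longleftrightarrow>
    P \<in> polys n \<and> (\<forall>C. C \<subseteq> shadow \<mu> i j \<and> card C = k \<longrightarrow> apply_op P (Delta (ferrers \<mu> - C)) = 0)"
proof -
  let ?Ms = "\<Union> {M (ferrers \<mu> - C) | C. C \<subseteq> shadow \<mu> i j \<and> card C = k}"
  have "(\<forall>Q\<in>qspan ?Ms. apply_op P Q = 0) \<longleftrightarrow>
      (\<forall>C. C \<subseteq> shadow \<mu> i j \<and> card C = k \<longrightarrow> apply_op P (Delta (ferrers \<mu> - C)) = 0)"
  proof (intro iffI allI impI ballI)
    fix C assume "\<forall>Q\<in>qspan ?Ms. apply_op P Q = 0" and C: "C \<subseteq> shadow \<mu> i j \<and> card C = k"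
    moreover have "Delta (ferrers \<mu> - C) \<in> M (ferrers \<mu> - C)"
      unfolding M_def by (intro in_qspan derivs.self)
    ultimately show "apply_op P (Delta (ferrers \<mu> - C)) = 0" by (blast intro: in_qspan)
  next
    fix Q assume kill: "\<forall>C. C \<subseteq> shadow \<mu> i j \<and> card C = k \<longrightarrow> apply_op P (Delta (ferrers \<mu> - C)) = 0"
      and "Q \<in> qspan ?Ms"
    show "apply_op P Q = 0"
    proof (rule kills_qspan[OF _ \<open>Q \<in> qspan ?Ms\<close>])
      fix q assume "q \<in> ?Ms"
      then obtain C where C: "C \<subseteq> shadow \<mu> i j \<and> card C = k" "q \<in> qspan (derivs (Delta (ferrers \<mu> - C)))"
        unfolding M_def by blast
      have "\<forall>d\<in>derivs (Delta (ferrers \<mu> - C)). apply_op P d = 0"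
        using kill C(1) by (simp add: kills_derivs_iff)
      then show "apply_op P q = 0" using C(2) by (blast intro: kills_qspan)
    qed
  qed
  then show ?thesis unfolding Ik_def Mk_def by simp
qed

lemma shadow_upward_closed:
  "c \<in> shadow \<mu> i j \<Longrightarrow> d \<in> ferrers \<mu> \<Longrightarrow> fst c \<le> fst d \<Longrightarrow> snd c \<le> snd d \<Longrightarrow> d \<in> shadow \<mu> i j"
  unfolding shadow_def by auto

lemma finite_ferrers: "finite (ferrers \<mu>)"
  and card_ferrers: "card (ferrers \<mu>) = sum_list \<mu>"
proof -
  have "ferrers \<mu> = Sigma {..<length \<mu>} (\<lambda>a. {..<\<mu> ! a})" unfolding ferrers_def by auto
  then show "finite (ferrers \<mu>)" "card (ferrers \<mu>) = sum_list \<mu>"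
    by (simp_all add: sum_list_sum_nth atLeast0LessThan)
qed

lemma polys_mono: "m \<le> n \<Longrightarrow> polys m \<subseteq> polys n"
  unfolding polys_def by fastforce

theorem mainTheorem4:
  fixes \<mu> :: "nat list" and n k i j :: nat
  assumes "is_partition \<mu>" and "sum_list \<mu> = n + k" and "(i, j) \<in> ferrers \<mu>"
  shows "Ik \<mu> n k i j =
    (\<Inter> {I_of (n + k) (pdiff (shift_mono n cs) (Delta (ferrers \<mu>))) | cs.
             length cs = k \<and> distinct cs \<and> set cs \<subseteq> shadow \<mu> i j \<and> sorted_wrt cell_less cs})
    \<inter> polys n"
proof -
  define ws where "ws = cells_sorted (ferrers \<mu>)"
  have ws: "sorted_wrt cell_less ws" "set ws = ferrers \<mu>"
    unfolding ws_def using cells_sorted finite_ferrers by blast+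
  then have "length ws = n + k"
    using sorted_cell_less_distinct[OF ws(1)] distinct_card card_ferrers assms(2) by metis
  have shadow: "shadow \<mu> i j \<subseteq> set ws" unfolding ws shadow_def by auto
  have "P \<in> Ik \<mu> n k i j \<longleftrightarrow> P \<in> \<Inter> {I_of (n + k) (pdiff (shift_mono n cs) (Delta (ferrers \<mu>))) | cs.
      length cs = k \<and> distinct cs \<and> set cs \<subseteq> shadow \<mu> i j \<and> sorted_wrt cell_less cs} \<inter> polys n" for P
  proof (cases "P \<in> polys n")
    case True
    then have "P \<in> polys (n + k)" using polys_mono[of n "n + k"] by auto
    then show ?thesis
      using kills_pdiff_shift_mono_iff_kills_Delta_diff[OF ws(1) \<open>length ws = n + k\<close> True shadow]
        shadow_upward_closed[of _ \<mu> i j] True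
      by (simp add: mem_Ik_iff mem_I_of_iff ws(2) setcompr_eq_image)
  qed (simp add: mem_Ik_iff)
  then show ?thesis by blast
qed

end
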